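(* Let $\alpha(n)$ be a sequence of positive reals and fix a positive integer $d$. Suppose there are real sequences $R(n)$, $\delta(n)>0$ and $C_r(n)$ ($0\le r\le d$) such that $\delta(n)\to0$, $C_r(n)\to c_r$, and, as $n\to\infty$, $$\frac{\alpha(n+j)}{\alpha(n)R(n)^j}=\sum_{r=0}^dC_r(n)\delta(n)^rj^r+o(\delta(n)^d)$$ for $j=1,\dots,d$. Let $R^*(n)$ and $\delta^*(n)>0$ be real sequences with $$R^*(n)=R(n)(1+o(\delta(n))),\qquad \delta^*(n)=\delta(n)(1+o(1))\qquad(n\to\infty).$$ Then there exist real sequences $C^*_r(n)$ with $C^*_r(n)\to c_r$ for each $r$, such that $$\frac{\alpha(n+j)}{\alpha(n)R^*(n)^j}=\sum_{r=0}^dC^*_r(n)\delta^*(n)^rj^r+o(\delta^*(n)^d)$$ as $n\to\infty$, for $j=1,\dots,d$. *)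

theory Defs
  imports "HOL-Analysis.Analysis" "HOL-Library.Landau_Symbols"
begin

end

theory Submission
  imports Defs
begin

text \<open>Replacing \<open>\<delta>\<close> by \<open>\<delta>\<^sup>*\<close> only rescales the coefficients, \<open>C\<^sub>r \<mapsto> C\<^sub>r (\<delta>/\<delta>\<^sup>*)\<^sup>r\<close>,
  because \<open>\<delta>/\<delta>\<^sup>* \<rightarrow> 1\<close> and hence \<open>o(\<delta>\<^sup>d) = o((\<delta>\<^sup>*)\<^sup>d)\<close>. Replacing \<open>R\<close> by \<open>R\<^sup>* = R (1 + \<epsilon>)\<close>
  divides the ratio by \<open>(1 + \<epsilon>)\<^sup>j = exp (- j \<lambda> \<delta>\<^sup>*)\<close> with \<open>\<lambda> = - ln (1 + \<epsilon>) / \<delta>\<^sup>* \<rightarrow> 0\<close>,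
  since \<open>\<epsilon> = o(\<delta>\<^sup>*)\<close>. The Taylor polynomial of \<open>exp (j \<lambda> \<delta>\<^sup>*)\<close> in \<open>j \<delta>\<^sup>*\<close> has coefficients
  \<open>\<lambda>\<^sup>k / k! \<rightarrow> [k = 0]\<close>, so multiplying the two expansions and truncating at order \<open>d\<close>
  yields coefficients (Cauchy products) that still tend to \<open>c\<^sub>r\<close>.\<close>

definition expansion_sum ::
    "(nat \<Rightarrow> 'a \<Rightarrow> real) \<Rightarrow> nat \<Rightarrow> ('a \<Rightarrow> real) \<Rightarrow> real \<Rightarrow> 'a \<Rightarrow> real" where
  "expansion_sum A d h x n = (\<Sum>r\<le>d. A r n * h n ^ r * x ^ r)"

definition cauchy_coeff ::
    "(nat \<Rightarrow> 'a \<Rightarrow> real) \<Rightarrow> (nat \<Rightarrow> 'a \<Rightarrow> real) \<Rightarrow> nat \<Rightarrow> 'a \<Rightarrow> real" where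
  "cauchy_coeff A B m n = (\<Sum>i\<le>m. A i n * B (m - i) n)"

definition exp_coeff :: "('a \<Rightarrow> real) \<Rightarrow> nat \<Rightarrow> 'a \<Rightarrow> real" where
  "exp_coeff l k n = l n ^ k / fact k"

lemma tendsto_imp_bigo_1:
  fixes f :: "'a \<Rightarrow> real"
  assumes "(f \<longlongrightarrow> c) F"
  shows "f \<in> O[F](\<lambda>_. 1)"
  using bigoI_tendsto[of f "\<lambda>_. 1" c F] assms by simp

lemma tendsto_zero_imp_smallo_1:
  fixes f :: "'a \<Rightarrow> real"
  assumes "(f \<longlongrightarrow> 0) F"
  shows "f \<in> o[F](\<lambda>_. 1)"
  using smalloI_tendsto[of f "\<lambda>_. 1" F] assms by simp

lemma smallo_imp_tendsto_zero:
  fixes \<epsilon> h :: "'a \<Rightarrow> real"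
  assumes "\<epsilon> \<in> o[F](h)" and "(h \<longlongrightarrow> 0) F"
  shows "(\<epsilon> \<longlongrightarrow> 0) F"
  using smalloD_tendsto[OF landau_o.small_big_trans[OF assms(1) tendsto_imp_bigo_1[OF assms(2)]]] by simp

lemma asymp_equiv_mult_one_plus:
  fixes f g \<eta> :: "'a \<Rightarrow> real"
  assumes "(\<eta> \<longlongrightarrow> 0) F" and "eventually (\<lambda>n. g n = f n * (1 + \<eta> n)) F"
  shows "g \<sim>[F] f"
proof -
  have "((\<lambda>n. 1 + \<eta> n) \<longlongrightarrow> 1) F"
    using tendsto_add[OF tendsto_const assms(1), of 1] by simp
  then have "(\<lambda>n. f n * (1 + \<eta> n)) \<sim>[F] (\<lambda>n. f n * 1)"
    by (intro asymp_equiv_mult asymp_equiv_refl tendsto_imp_asymp_equiv_const) simp_all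
  then show ?thesis
    by (rule asymp_equiv_transfer) (use assms(2) in \<open>simp_all add: eq_commute\<close>)
qed

lemma expansion_sum_tendsto:
  assumes "(h \<longlongrightarrow> 0) F" and "\<And>r. r \<le> d \<Longrightarrow> ((\<lambda>n. A r n) \<longlongrightarrow> a r) F"
  shows "(expansion_sum A d h x \<longlongrightarrow> a 0) F"
proof -
  have "(expansion_sum A d h x \<longlongrightarrow> (\<Sum>r\<le>d. a r * 0 ^ r * x ^ r)) F"
    unfolding expansion_sum_def by (intro tendsto_intros assms) auto
  also have "(\<Sum>r\<le>d. a r * 0 ^ r * x ^ r) = a 0"
    by (simp add: power_0_left if_distrib if_distribR cong: if_cong)
  finally show ?thesis .
qed

lemma expansion_sum_rescale:
  assumes "k n \<noteq> 0"
  shows "expansion_sum (\<lambda>r n. A r n * (h n / k n) ^ r) d k x n = expansion_sum A d h x n"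
  using assms unfolding expansion_sum_def by (simp add: power_divide)

lemma expansion_rescale:
  assumes f: "(\<lambda>n. f n - expansion_sum A d h x n) \<in> o[F](\<lambda>n. h n ^ d)"
    and hk: "h \<sim>[F] k" and k: "eventually (\<lambda>n. k n \<noteq> 0) F"
  shows "(\<lambda>n. f n - expansion_sum (\<lambda>r n. A r n * (h n / k n) ^ r) d k x n) \<in> o[F](\<lambda>n. k n ^ d)"
proof -
  have cong: "o[F](\<lambda>n. h n ^ d) = o[F](\<lambda>n. k n ^ d)"
    by (intro landau_o.small.cong_bigtheta asymp_equiv_imp_bigtheta asymp_equiv_power hk)
  have eq: "eventually (\<lambda>n. f n - expansion_sum A d h x n
                   = f n - expansion_sum (\<lambda>r n. A r n * (h n / k n) ^ r) d k x n) F"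
    using k by eventually_elim (simp add: expansion_sum_rescale)
  from f show ?thesis
    unfolding landau_o.small.in_cong[OF eq] cong .
qed

lemma cauchy_coeff_tendsto:
  assumes "\<And>i. i \<le> m \<Longrightarrow> ((\<lambda>n. A i n) \<longlongrightarrow> a i) F"
    and "\<And>i. i \<le> m \<Longrightarrow> ((\<lambda>n. B i n) \<longlongrightarrow> b i) F"
  shows "((\<lambda>n. cauchy_coeff A B m n) \<longlongrightarrow> (\<Sum>i\<le>m. a i * b (m - i))) F"
  unfolding cauchy_coeff_def by (intro tendsto_intros assms) auto

lemma cauchy_coeff_unit_tendsto:
  assumes "\<And>i. i \<le> m \<Longrightarrow> ((\<lambda>n. A i n) \<longlongrightarrow> a i) F"
    and "\<And>k. ((\<lambda>n. B k n) \<longlongrightarrow> (if k = 0 then 1 else 0)) F"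
  shows "((\<lambda>n. cauchy_coeff A B m n) \<longlongrightarrow> a m) F"
proof -
  have "((\<lambda>n. cauchy_coeff A B m n) \<longlongrightarrow> (\<Sum>i\<le>m. a i * (if m - i = 0 then 1 else 0))) F"
    by (intro cauchy_coeff_tendsto assms)
  also have "(\<Sum>i\<le>m. a i * (if m - i = 0 then 1 else 0)) = (\<Sum>i\<le>m. if i = m then a i else 0)"
    by (intro sum.cong refl) auto
  finally show ?thesis
    by simp
qed

lemma expansion_sum_mult:
  "expansion_sum A d h x n * expansion_sum B d h x n =
     expansion_sum (cauchy_coeff A B) d h x n +
     (\<Sum>(r, k) \<in> {(r, k). r \<le> d \<and> k \<le> d \<and> d < r + k}. A r n * B k n * (h n * x) ^ (r + k))"
proof -
  let ?g = "\<lambda>r k. A r n * B k n * (h n * x) ^ (r + k)"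
  have square: "{..d} \<times> {..d} = {(r, k). r + k \<le> d} \<union> {(r, k). r \<le> d \<and> k \<le> d \<and> d < r + k}"
    by auto
  have "expansion_sum A d h x n * expansion_sum B d h x n = (\<Sum>(r, k) \<in> {..d} \<times> {..d}. ?g r k)"
    unfolding expansion_sum_def sum_product sum.cartesian_product
    by (intro sum.cong refl) (auto simp: power_add power_mult_distrib)
  also have "\<dots> = (\<Sum>(r, k) \<in> {(r, k). r + k \<le> d}. ?g r k) +
                  (\<Sum>(r, k) \<in> {(r, k). r \<le> d \<and> k \<le> d \<and> d < r + k}. ?g r k)"
    unfolding square by (rule sum.union_disjoint) (auto intro: finite_subset[of _ "{..d} \<times> {..d}"])
  also have "(\<Sum>(r, k) \<in> {(r, k). r + k \<le> d}. ?g r k) = expansion_sum (cauchy_coeff A B) d h x n"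
    unfolding sum.triangle_reindex_eq expansion_sum_def cauchy_coeff_def sum_distrib_right
    by (intro sum.cong refl) (simp add: power_mult_distrib)
  finally show ?thesis .
qed

lemma expansion_tail_smallo:
  fixes x :: real
  assumes h: "(h \<longlongrightarrow> 0) F"
    and A: "\<And>r. r \<le> d \<Longrightarrow> ((\<lambda>n. A r n) \<longlongrightarrow> a r) F"
    and B: "\<And>k. k \<le> d \<Longrightarrow> ((\<lambda>n. B k n) \<longlongrightarrow> b k) F"
  shows "(\<lambda>n. \<Sum>(r, k) \<in> {(r, k). r \<le> d \<and> k \<le> d \<and> d < r + k}. A r n * B k n * (h n * x) ^ (r + k))
           \<in> o[F](\<lambda>n. h n ^ d)"
proof (intro big_sum_in_smallo, clarify)
  fix r k assume rk: "r \<le> d" "k \<le> d" "d < r + k"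
  have "((\<lambda>n. A r n * B k n * x ^ (r + k) * h n ^ (r + k - d)) \<longlongrightarrow> a r * b k * x ^ (r + k) * 0 ^ (r + k - d)) F"
    using rk by (intro tendsto_intros A B h) auto
  then have "((\<lambda>n. A r n * B k n * x ^ (r + k) * h n ^ (r + k - d)) \<longlongrightarrow> 0) F"
    using rk by (simp add: zero_power)
  then have "(\<lambda>n. A r n * B k n * x ^ (r + k) * h n ^ (r + k - d)) \<in> o[F](\<lambda>_. 1)"
    by (rule tendsto_zero_imp_smallo_1)
  then have "(\<lambda>n. A r n * B k n * x ^ (r + k) * h n ^ (r + k - d) * h n ^ d) \<in> o[F](\<lambda>n. 1 * h n ^ d)"
    by (rule landau_o.small_big_mult) simp
  moreover have "A r n * B k n * x ^ (r + k) * h n ^ (r + k - d) * h n ^ d = A r n * B k n * (h n * x) ^ (r + k)" for n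
    using rk by (simp add: power_mult_distrib mult_ac flip: power_add)
  ultimately show "(\<lambda>n. A r n * B k n * (h n * x) ^ (r + k)) \<in> o[F](\<lambda>n. h n ^ d)"
    by simp
qed

lemma expansion_mult:
  assumes h: "(h \<longlongrightarrow> 0) F"
    and A: "\<And>r. r \<le> d \<Longrightarrow> ((\<lambda>n. A r n) \<longlongrightarrow> a r) F"
    and B: "\<And>k. k \<le> d \<Longrightarrow> ((\<lambda>n. B k n) \<longlongrightarrow> b k) F"
    and f: "(\<lambda>n. f n - expansion_sum A d h x n) \<in> o[F](\<lambda>n. h n ^ d)"
    and g: "(\<lambda>n. g n - expansion_sum B d h x n) \<in> o[F](\<lambda>n. h n ^ d)"
  shows "(\<lambda>n. f n * g n - expansion_sum (cauchy_coeff A B) d h x n) \<in> o[F](\<lambda>n. h n ^ d)"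
proof -
  let ?PA = "expansion_sum A d h x" and ?PB = "expansion_sum B d h x"
  have PA: "?PA \<in> O[F](\<lambda>_. 1)"
    by (rule tendsto_imp_bigo_1, rule expansion_sum_tendsto[OF h A])
  have PB: "?PB \<in> O[F](\<lambda>_. 1)"
    by (rule tendsto_imp_bigo_1, rule expansion_sum_tendsto[OF h B])
  have "(\<lambda>n. h n ^ d) \<in> O[F](\<lambda>_. 1)"
    by (rule tendsto_imp_bigo_1[OF tendsto_power[OF h]])
  then have "(\<lambda>n. g n - ?PB n) \<in> O[F](\<lambda>_. 1)"
    by (rule landau_o.small_imp_big[OF landau_o.small_big_trans[OF g]])
  with PB have "(\<lambda>n. ?PB n + (g n - ?PB n)) \<in> O[F](\<lambda>_. 1)"
    by (rule sum_in_bigo)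
  then have g_bounded: "g \<in> O[F](\<lambda>_. 1)"
    by simp
  have e1: "(\<lambda>n. (f n - ?PA n) * g n) \<in> o[F](\<lambda>n. h n ^ d)"
    by (rule landau_o.small_1_mult[OF f g_bounded])
  have e2: "(\<lambda>n. (g n - ?PB n) * ?PA n) \<in> o[F](\<lambda>n. h n ^ d)"
    by (rule landau_o.small_1_mult[OF g PA])
  have e3: "(\<lambda>n. ?PA n * ?PB n - expansion_sum (cauchy_coeff A B) d h x n) \<in> o[F](\<lambda>n. h n ^ d)"
    using expansion_tail_smallo[OF h A B, where x=x] by (simp add: expansion_sum_mult)
  have "(\<lambda>n. (f n - ?PA n) * g n + (g n - ?PB n) * ?PA n
            + (?PA n * ?PB n - expansion_sum (cauchy_coeff A B) d h x n)) \<in> o[F](\<lambda>n. h n ^ d)"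
    by (rule sum_in_smallo(1)[OF sum_in_smallo(1)[OF e1 e2] e3])
  moreover have "(f n - ?PA n) * g n + (g n - ?PB n) * ?PA n
            + (?PA n * ?PB n - expansion_sum (cauchy_coeff A B) d h x n)
          = f n * g n - expansion_sum (cauchy_coeff A B) d h x n" for n
    by (simp add: algebra_simps)
  ultimately show ?thesis
    by simp
qed

lemma exp_coeff_tendsto:
  assumes "(l \<longlongrightarrow> 0) F"
  shows "((\<lambda>n. exp_coeff l k n) \<longlongrightarrow> (if k = 0 then 1 else 0)) F"
proof (cases "k = 0")
  case False
  have "((\<lambda>n. l n ^ k / fact k) \<longlongrightarrow> 0 ^ k / fact k) F"
    by (intro tendsto_intros assms) auto
  with False show ?thesis
    by (simp add: exp_coeff_def zero_power)
qed (simp add: exp_coeff_def)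

lemma exp_expansion:
  fixes l h :: "'a \<Rightarrow> real"
  assumes l: "(l \<longlongrightarrow> 0) F" and h: "(h \<longlongrightarrow> 0) F"
  shows "(\<lambda>n. exp (x * (l n * h n)) - expansion_sum (exp_coeff l) d h x n)
           \<in> o[F](\<lambda>n. h n ^ d)"
proof (rule landau_o.smallI)
  fix c :: real assume c: "c > 0"
  \<comment> \<open>\<open>q n * \<bar>h n\<bar> ^ d\<close> bounds the Lagrange remainder of order \<open>d\<close>, and \<open>q \<rightarrow> 0\<close>.\<close>
  define q where "q n = exp \<bar>x * (l n * h n)\<bar> / fact (Suc d) * \<bar>x * l n\<bar> ^ Suc d * \<bar>h n\<bar>" for n
  have "(q \<longlongrightarrow> exp \<bar>x * (0 * 0)\<bar> / fact (Suc d) * \<bar>x * 0\<bar> ^ Suc d * \<bar>0\<bar>) F"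
    unfolding q_def by (intro tendsto_intros l h) auto
  then have "eventually (\<lambda>n. q n < c) F"
    using c by (intro order_tendstoD) simp_all
  then show "eventually (\<lambda>n. norm (exp (x * (l n * h n)) - expansion_sum (exp_coeff l) d h x n)
                               \<le> c * norm (h n ^ d)) F"
  proof eventually_elim
    case (elim n)
    define t where "t = x * (l n * h n)"
    obtain \<tau> where \<tau>: "\<bar>\<tau>\<bar> \<le> \<bar>t\<bar>" "exp t = (\<Sum>m<Suc d. t ^ m / fact m) + exp \<tau> / fact (Suc d) * t ^ Suc d"
      using Maclaurin_exp_le by blast
    have "expansion_sum (exp_coeff l) d h x n = (\<Sum>m<Suc d. t ^ m / fact m)"
      unfolding expansion_sum_def exp_coeff_def lessThan_Suc_atMost t_def
      by (intro sum.cong refl) (simp add: power_mult_distrib)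
    then have "\<bar>exp t - expansion_sum (exp_coeff l) d h x n\<bar> = exp \<tau> / fact (Suc d) * \<bar>t\<bar> ^ Suc d"
      using \<tau>(2) by (simp add: abs_mult power_abs)
    also have "\<dots> \<le> exp \<bar>t\<bar> / fact (Suc d) * \<bar>t\<bar> ^ Suc d"
      using \<tau>(1) by (intro mult_right_mono divide_right_mono) auto
    also have "\<dots> = q n * \<bar>h n\<bar> ^ d"
      by (simp add: q_def t_def abs_mult power_mult_distrib)
    also have "\<dots> \<le> c * \<bar>h n\<bar> ^ d"
      using elim by (intro mult_right_mono) auto
    finally show ?case
      by (simp add: t_def power_abs)
  qed
qed

lemma abs_ln_one_plus_le:
  fixes x :: real
  assumes "\<bar>x\<bar> \<le> 1/2"
  shows "\<bar>ln (1 + x)\<bar> \<le> 2 * \<bar>x\<bar>"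
proof -
  have "\<bar>ln (1 + x) - x\<bar> \<le> 2 * x\<^sup>2"
    by (rule abs_ln_one_plus_x_minus_x_bound) (use assms in simp)
  moreover have "2 * x\<^sup>2 \<le> \<bar>x\<bar>"
    using mult_right_mono[OF assms abs_ge_zero[of x]] by (simp add: power2_eq_square)
  ultimately show ?thesis
    by linarith
qed

lemma ln_one_plus_bigo:
  fixes \<epsilon> :: "'a \<Rightarrow> real"
  assumes "(\<epsilon> \<longlongrightarrow> 0) F"
  shows "(\<lambda>n. ln (1 + \<epsilon> n)) \<in> O[F](\<epsilon>)"
proof (rule landau_o.bigI)
  have "eventually (\<lambda>n. \<bar>\<epsilon> n\<bar> < 1/2) F"
    using order_tendstoD(2)[OF tendsto_rabs[OF assms], of "1/2"] by simp
  then show "eventually (\<lambda>n. norm (ln (1 + \<epsilon> n)) \<le> 2 * norm (\<epsilon> n)) F"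
    by eventually_elim (simp add: abs_ln_one_plus_le)
qed simp

lemma ln_one_plus_div_tendsto:
  fixes \<epsilon> h :: "'a \<Rightarrow> real"
  assumes \<epsilon>: "\<epsilon> \<in> o[F](h)" and h: "(h \<longlongrightarrow> 0) F"
  shows "((\<lambda>n. - ln (1 + \<epsilon> n) / h n) \<longlongrightarrow> 0) F"
proof -
  have "(\<lambda>n. ln (1 + \<epsilon> n)) \<in> o[F](h)"
    by (rule landau_o.big_small_trans[OF ln_one_plus_bigo[OF smallo_imp_tendsto_zero[OF \<epsilon> h]] \<epsilon>])
  from tendsto_minus[OF smalloD_tendsto[OF this]] show ?thesis
    by simp
qed

lemma expansion_divide_one_plus_power:
  fixes j :: nat
  assumes h: "(h \<longlongrightarrow> 0) F" and h_nz: "eventually (\<lambda>n. h n \<noteq> 0) F"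
    and A: "\<And>r. r \<le> d \<Longrightarrow> ((\<lambda>n. A r n) \<longlongrightarrow> a r) F"
    and f: "(\<lambda>n. f n - expansion_sum A d h (real j) n) \<in> o[F](\<lambda>n. h n ^ d)"
    and \<epsilon>: "\<epsilon> \<in> o[F](h)"
  shows "(\<lambda>n. f n / (1 + \<epsilon> n) ^ j
            - expansion_sum (cauchy_coeff A (exp_coeff (\<lambda>n. - ln (1 + \<epsilon> n) / h n))) d h (real j) n)
           \<in> o[F](\<lambda>n. h n ^ d)"
proof -
  define l where "l = (\<lambda>n. - ln (1 + \<epsilon> n) / h n)"
  have \<epsilon>_lim: "(\<epsilon> \<longlongrightarrow> 0) F"
    using smallo_imp_tendsto_zero[OF \<epsilon> h] .
  have l: "(l \<longlongrightarrow> 0) F"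
    unfolding l_def by (rule ln_one_plus_div_tendsto[OF \<epsilon> h])
  have prod: "(\<lambda>n. f n * exp (real j * (l n * h n))
           - expansion_sum (cauchy_coeff A (exp_coeff l)) d h (real j) n) \<in> o[F](\<lambda>n. h n ^ d)"
    by (rule expansion_mult[OF h A exp_coeff_tendsto[OF l] f exp_expansion[OF l h]])
  have "((\<lambda>n. 1 + \<epsilon> n) \<longlongrightarrow> 1) F"
    using tendsto_add[OF tendsto_const \<epsilon>_lim, of 1] by simp
  then have "eventually (\<lambda>n. 1 + \<epsilon> n > 0) F"
    by (rule order_tendstoD) simp
  with h_nz have eq: "eventually (\<lambda>n. f n * exp (real j * (l n * h n))
      - expansion_sum (cauchy_coeff A (exp_coeff l)) d h (real j) n
    = f n / (1 + \<epsilon> n) ^ j - expansion_sum (cauchy_coeff A (exp_coeff l)) d h (real j) n) F"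
  proof eventually_elim
    case (elim n)
    then have "exp (real j * (l n * h n)) = inverse ((1 + \<epsilon> n) ^ j)"
      by (simp add: l_def exp_minus exp_of_nat_mult)
    then show ?case
      by (simp add: divide_inverse)
  qed
  show ?thesis
    using prod[unfolded landau_o.small.in_cong[OF eq]] by (simp only: l_def)
qed

theorem proposition4p4:
  fixes \<alpha> R \<delta> Rs \<delta>s :: "nat \<Rightarrow> real"
    and C :: "nat \<Rightarrow> nat \<Rightarrow> real" and c :: "nat \<Rightarrow> real" and d :: nat
  assumes alpha_pos: "\<And>n. \<alpha> n > 0"
    and d_pos: "d \<ge> 1"
    and delta_pos: "\<And>n. \<delta> n > 0"
    and delta_lim: "\<delta> \<longlonglongrightarrow> 0"
    and C_lim: "\<And>r. r \<le> d \<Longrightarrow> (\<lambda>n. C r n) \<longlonglongrightarrow> c r"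
    and expansion: "\<And>j. j \<in> {1..d} \<Longrightarrow>
        (\<lambda>n. \<alpha> (n + j) / (\<alpha> n * R n ^ j)
              - (\<Sum>r\<le>d. C r n * \<delta> n ^ r * real j ^ r))
        \<in> o(\<lambda>n. \<delta> n ^ d)"
    and Rs_asymp: "\<exists>\<epsilon>. \<epsilon> \<in> o(\<delta>) \<and> (\<forall>\<^sub>F n in sequentially. Rs n = R n * (1 + \<epsilon> n))"
    and deltas_pos: "\<And>n. \<delta>s n > 0"
    and deltas_asymp: "\<exists>\<eta>. \<eta> \<longlonglongrightarrow> 0 \<and> (\<forall>\<^sub>F n in sequentially. \<delta>s n = \<delta> n * (1 + \<eta> n))"
  shows "\<exists>Cs :: nat \<Rightarrow> nat \<Rightarrow> real.
           (\<forall>r\<le>d. (\<lambda>n. Cs r n) \<longlonglongrightarrow> c r) \<and>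
           (\<forall>j\<in>{1..d}.
              (\<lambda>n. \<alpha> (n + j) / (\<alpha> n * Rs n ^ j)
                    - (\<Sum>r\<le>d. Cs r n * \<delta>s n ^ r * real j ^ r))
              \<in> o(\<lambda>n. \<delta>s n ^ d))"
proof -
  obtain \<epsilon> where \<epsilon>: "\<epsilon> \<in> o(\<delta>)"
    and Rs_eq: "\<forall>\<^sub>F n in sequentially. Rs n = R n * (1 + \<epsilon> n)"
    using Rs_asymp by blast
  obtain \<eta> where "\<eta> \<longlonglongrightarrow> 0" and "\<forall>\<^sub>F n in sequentially. \<delta>s n = \<delta> n * (1 + \<eta> n)"
    using deltas_asymp by blast
  then have \<delta>_equiv: "\<delta> \<sim>[sequentially] \<delta>s"
    by (rule asymp_equiv_symI[OF asymp_equiv_mult_one_plus])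
  have \<delta>s_lim: "\<delta>s \<longlonglongrightarrow> 0"
    by (rule asymp_equiv_tendsto_transfer[OF \<delta>_equiv delta_lim])
  have \<delta>s_nz: "\<forall>\<^sub>F n in sequentially. \<delta>s n \<noteq> 0"
    using deltas_pos by (simp add: less_imp_neq[symmetric])
  have "\<epsilon> \<in> o(\<delta>s)"
    using \<epsilon> landau_o.small.cong_bigtheta[OF asymp_equiv_imp_bigtheta[OF \<delta>_equiv]] by simp
  define Cp where "Cp = (\<lambda>r n. C r n * (\<delta> n / \<delta>s n) ^ r)"
  have Cp_lim: "(\<lambda>n. Cp r n) \<longlonglongrightarrow> c r" if "r \<le> d" for r
    using tendsto_mult[OF C_lim[OF that]
        tendsto_power[OF asymp_equivD_strong[OF \<delta>_equiv], of r]] delta_pos by (simp add: Cp_def less_imp_neq[symmetric])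
  define Cs where "Cs = cauchy_coeff Cp (exp_coeff (\<lambda>n. - ln (1 + \<epsilon> n) / \<delta>s n))"
  show ?thesis
  proof (intro exI[of _ Cs] conjI allI impI ballI)
    fix m assume "m \<le> d"
    then show "(\<lambda>n. Cs m n) \<longlonglongrightarrow> c m"
      unfolding Cs_def
      by (intro cauchy_coeff_unit_tendsto Cp_lim exp_coeff_tendsto ln_one_plus_div_tendsto
          \<open>\<epsilon> \<in> o(\<delta>s)\<close> \<delta>s_lim) auto
  next
    fix j assume "j \<in> {1..d}"
    from expansion[OF this]
    have "(\<lambda>n. \<alpha> (n + j) / (\<alpha> n * R n ^ j) - expansion_sum Cp d \<delta>s (real j) n)
            \<in> o(\<lambda>n. \<delta>s n ^ d)"
      unfolding Cp_def by (intro expansion_rescale[OF _ \<delta>_equiv \<delta>s_nz]) (simp add: expansion_sum_def)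
    from expansion_divide_one_plus_power[OF \<delta>s_lim \<delta>s_nz Cp_lim this \<open>\<epsilon> \<in> o(\<delta>s)\<close>]
    have "(\<lambda>n. \<alpha> (n + j) / (\<alpha> n * R n ^ j) / (1 + \<epsilon> n) ^ j - expansion_sum Cs d \<delta>s (real j) n)
            \<in> o(\<lambda>n. \<delta>s n ^ d)"
      by (simp add: Cs_def)
    moreover have eq: "\<forall>\<^sub>F n in sequentially.
        \<alpha> (n + j) / (\<alpha> n * R n ^ j) / (1 + \<epsilon> n) ^ j - expansion_sum Cs d \<delta>s (real j) n
      = \<alpha> (n + j) / (\<alpha> n * Rs n ^ j) - (\<Sum>r\<le>d. Cs r n * \<delta>s n ^ r * real j ^ r)"
      using Rs_eq by eventually_elim (simp add: expansion_sum_def power_mult_distrib mult.assoc)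
    ultimately show "(\<lambda>n. \<alpha> (n + j) / (\<alpha> n * Rs n ^ j)
                      - (\<Sum>r\<le>d. Cs r n * \<delta>s n ^ r * real j ^ r)) \<in> o(\<lambda>n. \<delta>s n ^ d)"
      by (simp only: landau_o.small.in_cong[OF eq, symmetric])
  qed
qed

end
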